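(* Let $r>1$. The Danilov fan $\Sigma(r,1)$ is obtained from the cone $\Delta(r,1)$ by successive weighted blow-ups (star subdivisions) at the rays through $p_{r-1},p_{r-2},\dots,p_1$, in this order. The Danilov fan $\Sigma(r,r-1)$ is obtained from $\Delta(r,r-1)$ by successive weighted blow-ups at the rays through $p_1,p_2,\dots,p_{r-1}$, in this order.
   Context: Notation: for integers $s$ and $t>0$, $\langle s\rangle_t$ is the least non-negative integer congruent to $s$ modulo $t$. A pair of integers $(r,a)$ is admissible if $r\ge1$, $0\le a<r$, $\gcd(r,a)=1$ (so $a=0$ only for $r=1$). For admissible $(r,a)$ put $N(r,a)=\mathbb Z^3+\mathbb Z\cdot\frac1r(1,a,r-a)\subset\mathbb Q^3$; $e_1,e_2,e_3$ is the standard basis and $\Delta(r,a)$ the cone spanned by $e_1,e_2,e_3$ (its toric variety is the singularity $\frac1r(1,a,r-a)$). Let $b$ be an inverse of $a$ modulo $r$ and $p_i=\frac1r(\langle -ib\rangle_r,r-i,i)$, $i=0,\dots,r$ (so $p_0=e_2$, $p_r=e_3$, $p_{r-a}=\frac1r(1,a,r-a)$). For $r>1$ let $(r_L,a_L)=(r-a,\langle r\rangle_{r-a})$, $(r_R,a_R)=(a,\langle -r\rangle_a)$; there are lattice isomorphisms $L:N(r_L,a_L)\to N(r,a)$, $R:N(r_R,a_R)\to N(r,a)$ with $L(e_1)=e_1$, $L(e_2)=e_2$, $L(e_3)=p_{r-a}$, $R(e_1)=e_1$, $R(e_2)=p_{r-a}$, $R(e_3)=e_3$. The Danilov fan $\Sigma(r,a)$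 is defined recursively: $\Sigma(1,0)$ is $\Delta(1,0)$ with its faces; for $r>1$, $\Sigma(r,a)$ consists of the cone spanned by $e_2,e_3,p_{r-a}$ with its faces, together with $L(\Sigma(r_L,a_L))$ and $R(\Sigma(r_R,a_R))$. The weighted blow-up of a fan at the ray through a lattice point $p$ is its star subdivision at $p$: each cone containing $p$ is replaced by the cones spanned by $p$ and the faces of that cone not containing $p$. *)

theory Defs
  imports "HOL-Analysis.Analysis"
begin

text \<open>Points of N(r,a) tensor R = R^3 are represented as triples of reals.
  A fan is represented as a set of cones, each cone being a subset of R^3.\<close>

type_synonym pt3 = "real \<times> real \<times> real"

definition e1 :: pt3 where "e1 = (1, 0, 0)"
definition e2 :: pt3 where "e2 = (0, 1, 0)"
definition e3 :: pt3 where "e3 = (0, 0, 1)"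

definition cone_span :: "pt3 set \<Rightarrow> pt3 set" where
  "cone_span S = {x. \<exists>V c. finite V \<and> V \<subseteq> S \<and> (\<forall>v\<in>V. c v \<ge> 0) \<and>
                            x = (\<Sum>v\<in>V. c v *\<^sub>R v)}"

definition faces :: "pt3 set \<Rightarrow> pt3 set set" where
  "faces \<sigma> = {\<tau>. \<tau> face_of \<sigma> \<and> \<tau> \<noteq> {}}"

text \<open>The cone Delta(r,a), spanned by e1, e2, e3 (the same real cone for every (r,a)).\<close>
definition Delta :: "pt3 set" where
  "Delta = cone_span {e1, e2, e3}"

definition star_sub :: "pt3 set set \<Rightarrow> pt3 \<Rightarrow> pt3 set set" where
  "star_sub F p = {\<sigma> \<in> F. p \<notin> \<sigma>} \<union>
     {cone_span (insert p \<tau>) | \<sigma> \<tau>. \<sigma> \<in> F \<and> p \<in> \<sigma> \<and> \<tau> \<in> faces \<sigma> \<and> p \<notin> \<tau>}"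

definition inv_mod :: "nat \<Rightarrow> nat \<Rightarrow> nat" where
  "inv_mod r a = (SOME b. (a * b) mod r = 1 mod r)"

definition pnt :: "nat \<Rightarrow> nat \<Rightarrow> nat \<Rightarrow> pt3" where
  "pnt r a i = (let b = inv_mod r a in
     (of_int ((- (int i * int b)) mod int r) / real r,
      (real r - real i) / real r,
      real i / real r))"

definition Lmap :: "nat \<Rightarrow> nat \<Rightarrow> pt3 \<Rightarrow> pt3" where
  "Lmap r a x = (case x of (x1, x2, x3) \<Rightarrow> x1 *\<^sub>R e1 + x2 *\<^sub>R e2 + x3 *\<^sub>R pnt r a (r - a))"

definition Rmap :: "nat \<Rightarrow> nat \<Rightarrow> pt3 \<Rightarrow> pt3" where
  "Rmap r a x = (case x of (x1, x2, x3) \<Rightarrow> x1 *\<^sub>R e1 + x2 *\<^sub>R pnt r a (r - a) + x3 *\<^sub>R e3)"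

text \<open>The first branch covers
  (1,0); other non-admissible arguments (a = 0 or a >= r with r > 1) are irrelevant.
  Here (r_L,a_L) = (r-a, <r>_(r-a)) and (r_R,a_R) = (a, <-r>_a).\<close>
function danilov :: "nat \<Rightarrow> nat \<Rightarrow> pt3 set set" where
  "danilov r a =
     (if r \<le> 1 \<or> a = 0 \<or> r \<le> a then faces Delta
      else faces (cone_span {e2, e3, pnt r a (r - a)})
           \<union> (`) (Lmap r a) ` danilov (r - a) (r mod (r - a))
           \<union> (`) (Rmap r a) ` danilov a ((a - r mod a) mod a))"
  by pat_completeness auto
termination
  by (relation "Wellfounded.measure fst") auto

end

theory Submission
  imports Defs
begin

text \<open>
  For
  \<open>a = 1\<close>, the first centre \<open>q = p_(r-1)\<close> lies in the interior of \<open>Delta\<close>, so blowing it up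
  replaces \<open>Delta\<close> by the three simplicial cones on \<open>{e2, e3, q}\<close>, \<open>{e1, q, e3}\<close> and
  \<open>{e1, e2, q} = L Delta\<close>. The recursive definition of \<open>\<Sigma>(r, 1)\<close> produces the first two cones
  together with \<open>L \<Sigma>(r - 1, 1)\<close>. Since \<open>L\<close> is a linear isomorphism it commutes with star
  subdivision, the remaining centres are the \<open>L\<close>-images of the centres for \<open>\<Sigma>(r - 1, 1)\<close>,
  and a linear functional separates them from the two fixed cones; induction on \<open>r\<close> finishes
  the proof. The case \<open>a = r - 1\<close> is symmetric, with \<open>q = p_1\<close> and \<open>R\<close> in place of \<open>L\<close>.
\<close>

section \<open>Convex cones spanned by coordinate vectors\<close>

lemma convex_cone_hull_nonneg_combination:
  assumes "finite V" "V \<subseteq> S" "\<forall>v\<in>V. 0 \<le> c v"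
  shows "(\<Sum>v\<in>V. c v *\<^sub>R v) \<in> convex_cone hull S"
  using assms by (induction V rule: finite_induct)
    (auto intro: convex_cone_hull_contains_0 convex_cone_hull_add convex_cone_hull_mul hull_inc)

lemma cone_span_eq_convex_cone_hull: "cone_span S = convex_cone hull S"
proof
  show "cone_span S \<subseteq> convex_cone hull S"
    by (auto simp: cone_span_def intro!: convex_cone_hull_nonneg_combination)
next
  have "convex_cone hull S = insert 0 (conic hull (convex hull S))"
    by (rule convex_cone_hull_separate)
  moreover have "0 \<in> cone_span S"
    unfolding cone_span_def by (intro CollectI exI[of _ "{}"]) auto
  moreover have "c *\<^sub>R y \<in> cone_span S" if "c \<ge> 0" "y \<in> convex hull S" for c y
  proof -
    obtain V u where "finite V" "V \<subseteq> S" "\<forall>v\<in>V. 0 \<le> u v" "y = (\<Sum>v\<in>V. u v *\<^sub>R v)"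
      using \<open>y \<in> convex hull S\<close> unfolding convex_hull_explicit by blast
    then show ?thesis using \<open>c \<ge> 0\<close> unfolding cone_span_def
      by (intro CollectI exI[of _ V] exI[of _ "\<lambda>v. c * u v"]) (auto simp: scaleR_sum_right)
  qed
  ultimately show "convex_cone hull S \<subseteq> cone_span S"
    unfolding conic_hull_explicit by auto
qed

lemma convex_cone_hull_subset_Basis_eq:
  fixes T :: "'a::euclidean_space set"
  assumes "T \<subseteq> Basis"
  shows "convex_cone hull T = {x. (\<forall>b\<in>Basis. 0 \<le> x \<bullet> b) \<and> (\<forall>b\<in>Basis - T. x \<bullet> b = 0)}"
    (is "_ = ?O")
proof
  show "convex_cone hull T \<subseteq> ?O"
  proof (rule hull_minimal)
    show "T \<subseteq> ?O"
      using assms by (auto simp: inner_Basis)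
    show "convex_cone ?O"
      by (auto simp: convex_cone_iff inner_add_left)
  qed
  show "?O \<subseteq> convex_cone hull T"
  proof
    fix x assume x: "x \<in> ?O"
    have "x = (\<Sum>b\<in>Basis. (x \<bullet> b) *\<^sub>R b)" by (simp add: euclidean_representation)
    also have "\<dots> = (\<Sum>b\<in>T. (x \<bullet> b) *\<^sub>R b)"
      using x assms by (intro sum.mono_neutral_right) auto
    also have "\<dots> \<in> convex_cone hull T"
      using x finite_subset[OF assms finite_Basis] assms
      by (intro convex_cone_hull_nonneg_combination) auto
    finally show "x \<in> convex_cone hull T" .
  qed
qed

lemma mem_convex_cone_hull_subset_Basis_iff:
  fixes q :: "'a::euclidean_space"
  assumes "T \<subseteq> Basis" "\<forall>b\<in>Basis. 0 < q \<bullet> b"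
  shows "q \<in> convex_cone hull T \<longleftrightarrow> T = Basis"
  using assms by (force simp: convex_cone_hull_subset_Basis_eq less_le)

lemma face_of_convex_cone_hull_subset_Basis:
  fixes T :: "'a::euclidean_space set"
  assumes "T \<subseteq> Basis"
  shows "convex_cone hull T face_of convex_cone hull Basis"
proof -
  define a :: 'a where "a = - (\<Sum>b\<in>Basis - T. b)"
  have a: "a \<bullet> x = - (\<Sum>b\<in>Basis - T. x \<bullet> b)" for x
    unfolding a_def inner_minus_left inner_sum_left by (simp add: inner_commute)
  have "convex_cone hull Basis \<inter> {x. a \<bullet> x = 0} face_of convex_cone hull Basis"
    by (rule face_of_Int_supporting_hyperplane_le[OF convex_convex_cone_hull])
      (auto simp: a convex_cone_hull_subset_Basis_eq intro!: sum_nonneg)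
  moreover have "convex_cone hull Basis \<inter> {x. a \<bullet> x = 0} = convex_cone hull T"
  proof -
    have "(\<Sum>b\<in>Basis - T. x \<bullet> b) = 0 \<longleftrightarrow> (\<forall>b\<in>Basis - T. x \<bullet> b = 0)"
      if "\<forall>b\<in>Basis. 0 \<le> x \<bullet> b" for x
      using that by (intro sum_nonneg_eq_0_iff) auto
    then show ?thesis
      unfolding convex_cone_hull_subset_Basis_eq[OF assms] convex_cone_hull_subset_Basis_eq[OF order_refl] a
      by auto
  qed
  ultimately show ?thesis by simp
qed

lemma face_of_convex_cone_hull_Basis_eq:
  fixes F :: "'a::euclidean_space set"
  assumes F: "F face_of convex_cone hull Basis" "F \<noteq> {}"
  shows "F = convex_cone hull {b\<in>Basis. b \<in> F}"
proof
  let ?C = "convex_cone hull (Basis :: 'a set)"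
  have C: "?C = {x. \<forall>b\<in>Basis. 0 \<le> x \<bullet> b}"
    using convex_cone_hull_subset_Basis_eq[of Basis] by simp
  have cone_F: "convex_cone F"
    using F face_of_conic[OF conic_convex_cone_hull F(1)] face_of_imp_convex[OF F(1)]
    by (simp add: convex_cone_def)
  show "convex_cone hull {b\<in>Basis. b \<in> F} \<subseteq> F"
    using cone_F by (intro hull_minimal) auto
  txt \<open>A face containing \<open>x\<close> contains both ends of a segment through \<open>x\<close> inside the orthant;
    here \<open>x\<close> is the midpoint of \<open>2 (x \<bullet> b) b\<close> and \<open>2 (x - (x \<bullet> b) b)\<close>.\<close>
  have basis_in_F: "b \<in> F" if "x \<in> F" "b \<in> Basis" "0 < x \<bullet> b" for x b
  proof -
    define u where "u = (2 * (x \<bullet> b)) *\<^sub>R b"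
    define v where "v = 2 *\<^sub>R (x - (x \<bullet> b) *\<^sub>R b)"
    have "x \<in> ?C" using F(1) \<open>x \<in> F\<close> face_of_imp_subset by blast
    then have "u \<in> ?C" "v \<in> ?C"
      using that by (auto simp: C u_def v_def inner_diff_left inner_Basis)
    moreover have "x \<in> open_segment u v"
    proof -
      have "u \<bullet> b \<noteq> v \<bullet> b"
        using that by (simp add: u_def v_def inner_diff_left)
      then have "u \<noteq> v" by auto
      moreover have "midpoint u v = x"
        by (simp add: midpoint_def u_def v_def algebra_simps)
      ultimately show ?thesis using midpoint_in_open_segment[of u v] by simp
    qed
    ultimately have "u \<in> F" using face_ofD[OF F(1)] \<open>x \<in> F\<close> by blast
    then have "(1 / (2 * (x \<bullet> b))) *\<^sub>R u \<in> F"
      using cone_F \<open>0 < x \<bullet> b\<close> by (intro convex_cone_scaleR) auto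
    then show "b \<in> F" using \<open>0 < x \<bullet> b\<close> by (simp add: u_def)
  qed
  show "F \<subseteq> convex_cone hull {b\<in>Basis. b \<in> F}"
  proof
    fix x assume "x \<in> F"
    then have "x \<in> ?C" using F(1) face_of_imp_subset by blast
    then have "\<forall>b\<in>Basis. 0 \<le> x \<bullet> b" by (simp add: C)
    moreover have "x \<bullet> b = 0" if "b \<in> Basis" "b \<notin> F" for b
      using basis_in_F[OF \<open>x \<in> F\<close> that(1)] that \<open>\<forall>b\<in>Basis. 0 \<le> x \<bullet> b\<close>
      by (cases "0 < x \<bullet> b") auto
    ultimately show "x \<in> convex_cone hull {b\<in>Basis. b \<in> F}"
      by (subst convex_cone_hull_subset_Basis_eq) auto
  qed
qed

lemma Basis_pt3: "(Basis :: pt3 set) = {e1, e2, e3}"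
  by (simp add: Basis_prod_def zero_prod_def e1_def e2_def e3_def insert_commute)

lemma inner_Basis_pos_iff:
  fixes p :: pt3
  shows "(\<forall>b\<in>Basis. 0 < p \<bullet> b) \<longleftrightarrow> 0 < fst p \<and> 0 < fst (snd p) \<and> 0 < snd (snd p)"
  unfolding Basis_pt3 by (cases p) (simp add: e1_def e2_def e3_def inner_Pair)

lemma Delta_eq: "Delta = convex_cone hull Basis"
  by (simp add: Delta_def cone_span_eq_convex_cone_hull Basis_pt3)

section \<open>Simplicial fans\<close>

definition simplicial_fan :: "pt3 set \<Rightarrow> pt3 set set" where
  "simplicial_fan S = (\<lambda>T. convex_cone hull T) ` Pow S"

lemma faces_Delta: "faces Delta = simplicial_fan Basis"
proof (intro subset_antisym subsetI)
  fix F assume "F \<in> faces Delta"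
  then have "F = convex_cone hull {b\<in>Basis. b \<in> F}"
    by (intro face_of_convex_cone_hull_Basis_eq) (auto simp: faces_def Delta_eq)
  then show "F \<in> simplicial_fan Basis"
    unfolding simplicial_fan_def by blast
next
  fix F assume "F \<in> simplicial_fan Basis"
  then obtain T where "T \<subseteq> Basis" "F = convex_cone hull T"
    unfolding simplicial_fan_def by blast
  then show "F \<in> faces Delta"
    using face_of_convex_cone_hull_subset_Basis convex_cone_hull_nonempty
    by (auto simp: faces_def Delta_eq)
qed

lemma faces_linear_image:
  assumes "linear f" "inj f"
  shows "faces (f ` X) = (`) f ` faces X"
  using faces_of_linear_image[OF assms, of X] by (auto simp: faces_def)

lemma simplicial_fan_linear_image:
  assumes "linear f"
  shows "(`) f ` simplicial_fan S = simplicial_fan (f ` S)"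
  unfolding simplicial_fan_def image_Pow_surj[OF refl, of f S, symmetric] image_image
  by (simp add: convex_cone_hull_linear_image[OF assms])

lemma faces_simplicial_cone:
  fixes f :: "pt3 \<Rightarrow> pt3"
  assumes "linear f" "inj f"
  shows "faces (convex_cone hull (f ` Basis)) = simplicial_fan (f ` Basis)"
  using faces_linear_image[OF assms] simplicial_fan_linear_image[OF assms(1)] faces_Delta
  by (simp add: convex_cone_hull_linear_image[OF assms(1)] Delta_eq)

lemma simplicial_fan_avoids:
  assumes "\<forall>v\<in>S. 0 \<le> a \<bullet> v" "a \<bullet> p < 0"
  shows "\<forall>\<sigma>\<in>simplicial_fan S. p \<notin> \<sigma>"
proof -
  have "convex_cone hull T \<subseteq> {x. 0 \<le> a \<bullet> x}" if "T \<subseteq> S" for T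
  proof (rule hull_minimal)
    show "T \<subseteq> {x. 0 \<le> a \<bullet> x}" using that assms(1) by blast
  qed (rule convex_cone_halfspace_ge)
  then show ?thesis
    using assms(2) unfolding simplicial_fan_def by (force simp: subset_eq)
qed

definition basis_map :: "pt3 \<Rightarrow> pt3 \<Rightarrow> pt3 \<Rightarrow> pt3 \<Rightarrow> pt3" where
  "basis_map u v w x = fst x *\<^sub>R u + fst (snd x) *\<^sub>R v + snd (snd x) *\<^sub>R w"

lemma linear_basis_map: "linear (basis_map u v w)"
  by (rule linearI) (simp_all add: basis_map_def algebra_simps)

lemma basis_map_Basis: "basis_map u v w ` Basis = {u, v, w}"
  by (simp add: Basis_pt3 basis_map_def e1_def e2_def e3_def)

lemma inj_basis_map_interior:
  assumes "\<forall>b\<in>Basis. 0 < q \<bullet> b"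
  shows "inj (basis_map e1 e2 q)" "inj (basis_map e1 q e3)" "inj (basis_map e2 e3 q)"
  using assms unfolding inner_Basis_pos_iff linear_injective_0[OF linear_basis_map]
  by (cases q; auto simp: basis_map_def e1_def e2_def e3_def zero_prod_def)+

lemma image_faces_Delta_basis_map:
  "(`) (basis_map u v w) ` faces Delta = simplicial_fan {u, v, w}"
  unfolding faces_Delta simplicial_fan_linear_image[OF linear_basis_map] basis_map_Basis ..

lemma faces_cone_span_basis_map:
  "inj (basis_map u v w) \<Longrightarrow> faces (cone_span {u, v, w}) = simplicial_fan {u, v, w}"
  using faces_simplicial_cone[OF linear_basis_map] by (simp add: basis_map_Basis cone_span_eq_convex_cone_hull)

section \<open>Star subdivisions\<close>

lemma star_sub_alt:
  "star_sub F p = {\<sigma>\<in>F. p \<notin> \<sigma>} \<union>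
     (\<Union>\<sigma>\<in>{\<sigma>\<in>F. p \<in> \<sigma>}. (\<lambda>\<tau>. convex_cone hull (insert p \<tau>)) ` {\<tau>\<in>faces \<sigma>. p \<notin> \<tau>})"
  unfolding star_sub_def cone_span_eq_convex_cone_hull by blast

lemma star_sub_Un: "star_sub (A \<union> B) p = star_sub A p \<union> star_sub B p"
  unfolding star_sub_def by blast

lemma star_sub_avoided: "\<forall>\<sigma>\<in>F. p \<notin> \<sigma> \<Longrightarrow> star_sub F p = F"
  unfolding star_sub_def by blast

lemma star_sub_linear_image:
  assumes "linear M" "inj M"
  shows "star_sub ((`) M ` F) (M p) = (`) M ` star_sub F p"
proof -
  have mem: "M p \<in> M ` \<sigma> \<longleftrightarrow> p \<in> \<sigma>" for \<sigma>
    using assms(2) by (simp add: inj_image_mem_iff)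
  have "{\<sigma>\<in>(`) M ` G. M p \<notin> \<sigma>} = (`) M ` {\<sigma>\<in>G. p \<notin> \<sigma>}"
       "{\<sigma>\<in>(`) M ` G. M p \<in> \<sigma>} = (`) M ` {\<sigma>\<in>G. p \<in> \<sigma>}" for G
    using mem by auto
  moreover have "convex_cone hull (insert (M p) (M ` \<tau>)) = M ` (convex_cone hull (insert p \<tau>))" for \<tau>
    by (simp flip: convex_cone_hull_linear_image[OF assms(1)])
  ultimately show ?thesis
    unfolding star_sub_alt by (simp add: faces_linear_image[OF assms] image_Un image_UN image_image)
qed

lemma foldl_star_sub_linear_image:
  assumes "linear M" "inj M" "\<forall>p\<in>set ps. \<forall>\<sigma>\<in>A. M p \<notin> \<sigma>"
  shows "foldl star_sub (A \<union> (`) M ` F) (map M ps) = A \<union> (`) M ` foldl star_sub F ps"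
  using assms(3)
proof (induction ps arbitrary: F)
  case (Cons p ps)
  then have "star_sub (A \<union> (`) M ` F) (M p) = A \<union> (`) M ` star_sub F p"
    by (simp add: star_sub_Un star_sub_avoided star_sub_linear_image[OF assms(1,2)])
  then show ?case using Cons by simp
qed simp

lemma foldl_star_sub_Cons_linear_image:
  assumes "star_sub F q = A \<union> (`) M ` F" "linear M" "inj M" "\<forall>p\<in>set ps. \<forall>\<sigma>\<in>A. M p \<notin> \<sigma>"
  shows "foldl star_sub F (q # map M ps) = A \<union> (`) M ` foldl star_sub F ps"
  using foldl_star_sub_linear_image[OF assms(2-4)] assms(1) by simp

lemma proper_subsets_Un_insert:
  assumes "q \<notin> B"
  shows "{T. T \<subset> B} \<union> insert q ` {T. T \<subset> B} = (\<Union>b\<in>B. Pow (insert q (B - {b})))"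
proof (intro subset_antisym subsetI)
  fix U assume "U \<in> {T. T \<subset> B} \<union> insert q ` {T. T \<subset> B}"
  then obtain T where "T \<subset> B" "U \<subseteq> insert q T" by blast
  then obtain b where "b \<in> B" "b \<notin> T" by blast
  with \<open>T \<subset> B\<close> \<open>U \<subseteq> insert q T\<close> show "U \<in> (\<Union>b\<in>B. Pow (insert q (B - {b})))" by blast
next
  fix U assume "U \<in> (\<Union>b\<in>B. Pow (insert q (B - {b})))"
  then obtain b where b: "b \<in> B" "U \<subseteq> insert q (B - {b})" by blast
  then have "U - {q} \<subset> B" by blast
  moreover have "U = U - {q} \<or> U = insert q (U - {q})" by blast
  ultimately show "U \<in> {T. T \<subset> B} \<union> insert q ` {T. T \<subset> B}" by blast
qed

lemma star_sub_faces_Delta_interior: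
  assumes q: "\<forall>b\<in>Basis. 0 < q \<bullet> b"
  shows "star_sub (faces Delta) q
    = simplicial_fan {e2, e3, q} \<union> simplicial_fan {e1, q, e3} \<union> simplicial_fan {e1, e2, q}"
proof -
  let ?P = "{T. T \<subset> (Basis :: pt3 set)}"
  have q_mem: "T \<subseteq> Basis \<Longrightarrow> q \<in> convex_cone hull T \<longleftrightarrow> T = Basis" for T
    using mem_convex_cone_hull_subset_Basis_iff q by blast
  have avoiding: "{\<sigma>\<in>faces Delta. q \<notin> \<sigma>} = (\<lambda>T. convex_cone hull T) ` ?P"
    using q_mem unfolding faces_Delta simplicial_fan_def by auto
  have containing: "{\<sigma>\<in>faces Delta. q \<in> \<sigma>} = {Delta}"
    using q_mem unfolding faces_Delta simplicial_fan_def by (auto simp: Delta_eq)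
  have "star_sub (faces Delta) q = (\<lambda>T. convex_cone hull T) ` (?P \<union> insert q ` ?P)"
    unfolding star_sub_alt avoiding containing
    by (simp add: avoiding image_Un image_image hull_insert[of _ q, symmetric])
  also have "\<dots> = (\<lambda>T. convex_cone hull T) ` (\<Union>b\<in>Basis. Pow (insert q (Basis - {b})))"
  proof -
    have "q \<notin> Basis"
    proof
      assume "q \<in> Basis"
      then have "{q} = Basis" using q_mem[of "{q}"] by (simp add: hull_inc)
      then have "e1 = e2" using Basis_pt3 by (metis insertCI singletonD)
      then show False by (simp add: e1_def e2_def)
    qed
    then show ?thesis by (simp add: proper_subsets_Un_insert)
  qed
  also have "\<dots> = (\<lambda>T. convex_cone hull T) ` (Pow {e2, e3, q} \<union> Pow {e1, q, e3} \<union> Pow {e1, e2, q})"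
    by (simp add: Basis_pt3 insert_Diff_if e1_def e2_def e3_def insert_commute Un_ac)
  finally show ?thesis by (simp add: simplicial_fan_def image_Un)
qed

section \<open>The points p_i for a = 1 and a = r - 1\<close>

lemma inv_mod_1_mod: "1 < r \<Longrightarrow> int (inv_mod r 1) mod int r = 1"
proof -
  assume "1 < r"
  have "(1 * inv_mod r 1) mod r = 1 mod r"
    unfolding inv_mod_def by (rule someI[of _ 1]) simp
  with \<open>1 < r\<close> show ?thesis by (simp flip: of_nat_mod)
qed

lemma inv_mod_pred_mod: "1 < r \<Longrightarrow> (- int (inv_mod r (r - 1))) mod int r = 1"
proof -
  assume "1 < r"
  have "((r - 1) * (r - 1)) mod r = 1 mod r"
  proof -
    obtain k where "r = k + 2" using \<open>1 < r\<close> by (metis add.commute less_iff_Suc_add one_add_one plus_1_eq_Suc add_Suc_right)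
    then have "(r - 1) * (r - 1) = r * k + 1" by (simp add: algebra_simps)
    then show ?thesis using \<open>1 < r\<close> by (simp add: mod_Suc)
  qed
  then have "((r - 1) * inv_mod r (r - 1)) mod r = 1 mod r"
    unfolding inv_mod_def by (rule someI)
  then have "int ((r - 1) * inv_mod r (r - 1) mod r) = 1"
    using \<open>1 < r\<close> by simp
  then have "((int r - 1) * int (inv_mod r (r - 1))) mod int r = 1"
    using \<open>1 < r\<close> unfolding of_nat_mod of_nat_mult by (simp add: of_nat_diff)
  then show ?thesis
    by (simp add: algebra_simps mod_diff_left_eq[symmetric])
qed

lemma pnt_1:
  assumes "0 < i" "i < r"
  shows "pnt r 1 i = ((real r - real i) / real r, (real r - real i) / real r, real i / real r)"
proof -
  have "(- (int i * int (inv_mod r 1))) mod int r = (- (int i * (int (inv_mod r 1) mod int r))) mod int r"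
    by (metis mod_minus_eq mod_mult_right_eq)
  also have "\<dots> = int r - int i"
    using assms inv_mod_1_mod[of r] by (simp add: zmod_zminus1_eq_if)
  finally show ?thesis
    using assms by (simp add: pnt_def Let_def of_nat_diff)
qed

lemma pnt_pred:
  assumes "1 < r" "i < r"
  shows "pnt r (r - 1) i = (real i / real r, (real r - real i) / real r, real i / real r)"
proof -
  have "(- (int i * int (inv_mod r (r - 1)))) mod int r
      = (int i * ((- int (inv_mod r (r - 1))) mod int r)) mod int r"
    by (metis mod_mult_right_eq mult_minus_right)
  also have "\<dots> = int i"
    using assms inv_mod_pred_mod[of r] by simp
  finally show ?thesis by (simp add: pnt_def Let_def)
qed

lemma Lmap_eq: "Lmap r a = basis_map e1 e2 (pnt r a (r - a))"
  by (rule ext) (simp add: Lmap_def basis_map_def split: prod.split)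

lemma Rmap_eq: "Rmap r a = basis_map e1 (pnt r a (r - a)) e3"
  by (rule ext) (simp add: Rmap_def basis_map_def split: prod.split)

lemma Lmap_pnt_1:
  assumes "0 < j" "j < n"
  shows "Lmap (Suc n) 1 (pnt n 1 j) = pnt (Suc n) 1 j"
proof -
  define x y where "x = real n" and "y = real j"
  have "0 < x" using assms by (simp add: x_def)
  moreover have "pnt n 1 j = ((x - y) / x, (x - y) / x, y / x)"
    "pnt (Suc n) 1 n = (1 / (x + 1), 1 / (x + 1), x / (x + 1))"
    "pnt (Suc n) 1 j = ((x + 1 - y) / (x + 1), (x + 1 - y) / (x + 1), y / (x + 1))"
    using assms pnt_1[of j n] pnt_1[of n "Suc n"] pnt_1[of j "Suc n"]
    by (simp_all add: x_def y_def ac_simps)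
  ultimately show ?thesis
    by (simp add: Lmap_def e1_def e2_def divide_simps) (simp add: algebra_simps)
qed

lemma Rmap_pnt_pred:
  assumes "0 < i" "i < n"
  shows "Rmap (Suc n) n (pnt n (n - 1) i) = pnt (Suc n) n (Suc i)"
proof -
  define x y where "x = real n" and "y = real i"
  have "0 < x" using assms by (simp add: x_def)
  moreover have "pnt n (n - 1) i = (y / x, (x - y) / x, y / x)"
    "pnt (Suc n) n 1 = (1 / (x + 1), x / (x + 1), 1 / (x + 1))"
    "pnt (Suc n) n (Suc i) = ((y + 1) / (x + 1), (x - y) / (x + 1), (y + 1) / (x + 1))"
    using assms pnt_pred[of n i] pnt_pred[of "Suc n" 1] pnt_pred[of "Suc n" "Suc i"]
    by (simp_all add: x_def y_def ac_simps)
  ultimately show ?thesis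
    by (simp add: Rmap_def e1_def e3_def divide_simps) (simp add: algebra_simps)
qed

text \<open>Each cone fixed by the first blow-up lies in a half-space \<open>0 \<le> a \<bullet> x\<close> with
  \<open>a = (-n, 0, 1)\<close> or \<open>a = (0, -n, 1)\<close>, while \<open>a \<bullet> p_j = j - n < 0\<close> at the later centres.\<close>

lemma pnt_1_avoids:
  assumes "0 < j" "j < n"
  shows "\<forall>\<sigma>\<in>simplicial_fan {e2, e3, pnt (Suc n) 1 n} \<union> simplicial_fan {e1, pnt (Suc n) 1 n, e3}.
           pnt (Suc n) 1 j \<notin> \<sigma>"
proof -
  define x y where "x = real n" and "y = real j"
  have "0 < x" "y < x" using assms by (simp_all add: x_def y_def)
  have q: "pnt (Suc n) 1 n = (1 / (x + 1), 1 / (x + 1), x / (x + 1))"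
    and p: "pnt (Suc n) 1 j = ((x + 1 - y) / (x + 1), (x + 1 - y) / (x + 1), y / (x + 1))"
    using assms pnt_1[of n "Suc n"] pnt_1[of j "Suc n"] by (simp_all add: x_def y_def ac_simps)
  have "(- x, 0, 1) \<bullet> pnt (Suc n) 1 j = y - x" "(0, - x, 1) \<bullet> pnt (Suc n) 1 j = y - x"
    unfolding p using \<open>0 < x\<close> by (simp_all add: inner_Pair divide_simps) (simp_all add: algebra_simps)
  then have "(- x, 0, 1) \<bullet> pnt (Suc n) 1 j < 0" "(0, - x, 1) \<bullet> pnt (Suc n) 1 j < 0"
    using \<open>y < x\<close> by simp_all
  moreover have "\<forall>v\<in>{e2, e3, pnt (Suc n) 1 n}. 0 \<le> (- x, 0, 1) \<bullet> v"
    "\<forall>v\<in>{e1, pnt (Suc n) 1 n, e3}. 0 \<le> (0, - x, 1) \<bullet> v"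
    unfolding q by (simp_all add: e1_def e2_def e3_def inner_Pair)
  ultimately show ?thesis
    using simplicial_fan_avoids by blast
qed

lemma pnt_pred_avoids:
  assumes "0 < i" "i < n"
  shows "\<forall>\<sigma>\<in>simplicial_fan {e2, e3, pnt (Suc n) n 1} \<union> simplicial_fan {e1, e2, pnt (Suc n) n 1}.
           pnt (Suc n) n (Suc i) \<notin> \<sigma>"
proof -
  define x y where "x = real n" and "y = real i"
  have "0 < x" "0 < y" using assms by (simp_all add: x_def y_def)
  have q: "pnt (Suc n) n 1 = (1 / (x + 1), x / (x + 1), 1 / (x + 1))"
    and p: "pnt (Suc n) n (Suc i) = ((y + 1) / (x + 1), (x - y) / (x + 1), (y + 1) / (x + 1))"
    using assms pnt_pred[of "Suc n" 1] pnt_pred[of "Suc n" "Suc i"] by (simp_all add: x_def y_def ac_simps)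
  have "(- x, 1, 0) \<bullet> pnt (Suc n) n (Suc i) = - y" "(0, 1, - x) \<bullet> pnt (Suc n) n (Suc i) = - y"
    unfolding p using \<open>0 < x\<close> by (simp_all add: inner_Pair divide_simps) (simp_all add: algebra_simps)
  then have "(- x, 1, 0) \<bullet> pnt (Suc n) n (Suc i) < 0" "(0, 1, - x) \<bullet> pnt (Suc n) n (Suc i) < 0"
    using \<open>0 < y\<close> by simp_all
  moreover have "\<forall>v\<in>{e2, e3, pnt (Suc n) n 1}. 0 \<le> (- x, 1, 0) \<bullet> v"
    "\<forall>v\<in>{e1, e2, pnt (Suc n) n 1}. 0 \<le> (0, 1, - x) \<bullet> v"
    unfolding q by (simp_all add: e1_def e2_def e3_def inner_Pair)
  ultimately show ?thesis
    using simplicial_fan_avoids by blast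
qed

section \<open>Danilov fans\<close>

declare danilov.simps [simp del]

lemma danilov_one: "danilov (Suc 0) a = faces Delta"
  by (subst danilov.simps) simp

lemma danilov_Suc_1:
  assumes "0 < n"
  shows "danilov (Suc n) 1 = faces (cone_span {e2, e3, pnt (Suc n) 1 n})
    \<union> (`) (basis_map e1 e2 (pnt (Suc n) 1 n)) ` danilov n 1
    \<union> (`) (basis_map e1 (pnt (Suc n) 1 n) e3) ` faces Delta"
proof -
  have "danilov n (Suc n mod n) = danilov n 1"
    using assms by (cases "n = 1") (simp_all add: danilov_one mod_Suc)
  with assms show ?thesis
    by (subst danilov.simps[of "Suc n" 1]) (simp add: danilov_one Lmap_eq Rmap_eq)
qed

lemma danilov_Suc_pred:
  assumes "0 < n"
  shows "danilov (Suc n) n = faces (cone_span {e2, e3, pnt (Suc n) n 1})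
    \<union> (`) (basis_map e1 e2 (pnt (Suc n) n 1)) ` faces Delta
    \<union> (`) (basis_map e1 (pnt (Suc n) n 1) e3) ` danilov n (n - 1)"
proof -
  have "danilov n ((n - Suc n mod n) mod n) = danilov n (n - 1)"
    using assms by (cases "n = 1") (simp_all add: danilov_one mod_Suc)
  with assms show ?thesis
    by (subst danilov.simps[of "Suc n" n]) (simp add: danilov_one Lmap_eq Rmap_eq)
qed

lemma danilov_1_eq_foldl_star_sub:
  "0 < r \<Longrightarrow> danilov r 1 = foldl star_sub (faces Delta) (map (\<lambda>i. pnt r 1 (r - i)) [1..<r])"
proof (induction r rule: nat_induct_non_zero)
  case 1
  show ?case by (simp add: danilov_one)
next
  case (Suc n)
  define q where "q = pnt (Suc n) 1 n"
  define L where "L = basis_map e1 e2 q"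
  define A where "A = simplicial_fan {e2, e3, q} \<union> simplicial_fan {e1, q, e3}"
  define ps where "ps = map (\<lambda>i. pnt n 1 (n - i)) [1..<n]"
  have q_interior: "\<forall>b\<in>Basis. 0 < q \<bullet> b"
    using Suc.hyps pnt_1[of n "Suc n"] by (simp add: q_def inner_Basis_pos_iff)
  have L: "linear L" "inj L"
    using inj_basis_map_interior(1)[OF q_interior] by (simp_all add: L_def linear_basis_map)
  have recursion: "danilov (Suc n) 1 = A \<union> (`) L ` danilov n 1"
    unfolding danilov_Suc_1[OF Suc.hyps, folded q_def] L_def A_def
    using inj_basis_map_interior(3)[OF q_interior]
    by (simp add: faces_cone_span_basis_map image_faces_Delta_basis_map Un_ac)
  have star: "star_sub (faces Delta) q = A \<union> (`) L ` faces Delta"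
    using star_sub_faces_Delta_interior[OF q_interior]
    by (simp add: A_def L_def image_faces_Delta_basis_map)
  have points: "map (\<lambda>i. pnt (Suc n) 1 (Suc n - i)) [1..<Suc n] = q # map L ps"
  proof -
    have "pnt (Suc n) 1 (n - i) = L (pnt n 1 (n - i))" if "i \<in> set [1..<n]" for i
      using that Lmap_pnt_1[of "n - i" n] by (simp add: L_def q_def Lmap_eq)
    moreover have "[1..<Suc n] = 1 # map Suc [1..<n]"
      using Suc.hyps by (simp add: upt_conv_Cons map_Suc_upt del: upt_Suc)
    ultimately show ?thesis
      by (simp add: ps_def q_def del: upt_Suc)
  qed
  have avoids: "\<forall>p\<in>set ps. \<forall>\<sigma>\<in>A. L p \<notin> \<sigma>"
    using Lmap_pnt_1 pnt_1_avoids by (auto simp: ps_def A_def q_def L_def Lmap_eq)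
  have IH: "danilov n 1 = foldl star_sub (faces Delta) ps"
    using Suc.IH by (simp add: ps_def)
  show ?case
    unfolding recursion points IH using foldl_star_sub_Cons_linear_image[OF star L avoids] by simp
qed

lemma danilov_pred_eq_foldl_star_sub:
  "0 < r \<Longrightarrow> danilov r (r - 1) = foldl star_sub (faces Delta) (map (\<lambda>i. pnt r (r - 1) i) [1..<r])"
proof (induction r rule: nat_induct_non_zero)
  case 1
  show ?case by (simp add: danilov_one)
next
  case (Suc n)
  define q where "q = pnt (Suc n) n 1"
  define R where "R = basis_map e1 q e3"
  define A where "A = simplicial_fan {e2, e3, q} \<union> simplicial_fan {e1, e2, q}"
  define ps where "ps = map (\<lambda>i. pnt n (n - 1) i) [1..<n]"
  have q_interior: "\<forall>b\<in>Basis. 0 < q \<bullet> b"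
    using Suc.hyps pnt_pred[of "Suc n" 1] by (simp add: q_def inner_Basis_pos_iff)
  have R: "linear R" "inj R"
    using inj_basis_map_interior(2)[OF q_interior] by (simp_all add: R_def linear_basis_map)
  have recursion: "danilov (Suc n) n = A \<union> (`) R ` danilov n (n - 1)"
    unfolding danilov_Suc_pred[OF Suc.hyps, folded q_def] R_def A_def
    using inj_basis_map_interior(3)[OF q_interior]
    by (simp add: faces_cone_span_basis_map image_faces_Delta_basis_map Un_ac)
  have star: "star_sub (faces Delta) q = A \<union> (`) R ` faces Delta"
    using star_sub_faces_Delta_interior[OF q_interior]
    by (simp add: A_def R_def image_faces_Delta_basis_map Un_ac)
  have points: "map (\<lambda>i. pnt (Suc n) n i) [1..<Suc n] = q # map R ps"
  proof -
    have "pnt (Suc n) n (Suc i) = R (pnt n (n - 1) i)" if "i \<in> set [1..<n]" for i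
      using that Rmap_pnt_pred[of i n] by (simp add: R_def q_def Rmap_eq)
    moreover have "[1..<Suc n] = 1 # map Suc [1..<n]"
      using Suc.hyps by (simp add: upt_conv_Cons map_Suc_upt del: upt_Suc)
    ultimately show ?thesis
      by (simp add: ps_def q_def del: upt_Suc)
  qed
  have avoids: "\<forall>p\<in>set ps. \<forall>\<sigma>\<in>A. R p \<notin> \<sigma>"
    using Rmap_pnt_pred pnt_pred_avoids by (auto simp: ps_def A_def q_def R_def Rmap_eq)
  have IH: "danilov n (n - 1) = foldl star_sub (faces Delta) ps"
    using Suc.IH by (simp add: ps_def)
  show ?case
    unfolding diff_Suc_1 recursion points IH using foldl_star_sub_Cons_linear_image[OF star R avoids] by simp
qed

theorem mainTheorem2:
  fixes r :: nat
  assumes "r > 1"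
  shows "danilov r 1 = foldl star_sub (faces Delta) (map (\<lambda>i. pnt r 1 (r - i)) [1..<r])
       \<and> danilov r (r - 1) = foldl star_sub (faces Delta) (map (\<lambda>i. pnt r (r - 1) i) [1..<r])"
  using assms danilov_1_eq_foldl_star_sub danilov_pred_eq_foldl_star_sub by simp

thm_deps mainTheorem2

end
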